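(* Let $f\colon\{0,1\}^n\to\{0,1\}^n$ and $F(x,i)=f(x)_{1,\ldots,i-1}$ on $\{0,1\}^n\times[n]$, and let $Z=(X,I)$ be uniform on $\{0,1\}^n\times[n]$. Let $A$ be an $F$-collision-finder, and for $(x,i)$ let $\varepsilon(x,i)$ be the statistical distance between the output distribution of $A(x,i;R)$ ($R$ uniform coins) and the uniform distribution on $F^{-1}(F(x,i))$. If $H(A(Z;R)\mid Z)\ge H(Z\mid F(Z))-\frac{1}{64n^2}$, then $\mathbb{E}_{i\leftarrow[n],x\leftarrow\{0,1\}^n}[\varepsilon(x,i)]\le\frac{1}{8n}$.
   Context: An $F$-collision-finder is a randomized algorithm $A$ with $A(z;r)\in F^{-1}(F(z))$ for every input $z$ in the domain of $F$ and coins $r$. Statistical distance between $P,Q$ is $\max_T|P(T)-Q(T)|$. $H(\cdot\mid\cdot)$ is conditional Shannon entropy. *)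

theory Defs
  imports "HOL-Probability.Probability"
begin

definition entropy_pmf :: "'a pmf \<Rightarrow> real" where
  "entropy_pmf p = - (\<Sum>x\<in>set_pmf p. pmf p x * log 2 (pmf p x))"

text \<open>Conditional Shannon entropy H(Y | X) (in bits) of a finitely supported
  joint distribution of the pair (X, Y).\<close>
definition cond_entropy_pmf :: "('a \<times> 'b) pmf \<Rightarrow> real" where
  "cond_entropy_pmf p =
     (\<Sum>xy\<in>set_pmf p. pmf p xy * log 2 (pmf (map_pmf fst p) (fst xy) / pmf p xy))"

definition stat_dist :: "'a pmf \<Rightarrow> 'a pmf \<Rightarrow> real" where
  "stat_dist P Q = (SUP T. \<bar>measure_pmf.prob P T - measure_pmf.prob Q T\<bar>)"

definition dom_n :: "nat \<Rightarrow> (bool list \<times> nat) set" where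
  "dom_n n = {(x, i). length x = n \<and> i \<in> {1..n}}"

definition Fpre :: "(bool list \<Rightarrow> bool list) \<Rightarrow> bool list \<times> nat \<Rightarrow> bool list" where
  "Fpre f z = take (snd z - 1) (f (fst z))"

definition Fpreimage :: "nat \<Rightarrow> (bool list \<Rightarrow> bool list) \<Rightarrow> bool list \<times> nat \<Rightarrow> (bool list \<times> nat) set" where
  "Fpreimage n f z = {z' \<in> dom_n n. Fpre f z' = Fpre f z}"

definition out_dist :: "('z \<Rightarrow> 'r::finite \<Rightarrow> 'w) \<Rightarrow> 'z \<Rightarrow> 'w pmf" where
  "out_dist A z = map_pmf (A z) (pmf_of_set (UNIV :: 'r set))"

end

theory Submission
  imports Defs
begin

text \<open>
  For an input z let P_z be the output distribution of A and S_z = F^{-1}(F(z)). Since A is a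
  collision finder, P_z is supported on S_z, so log |S_z| - H(P_z) is the relative entropy of
  P_z with respect to the uniform distribution on S_z, and a Pinsker-type inequality bounds the
  squared statistical distance \<epsilon>(z)^2 by this gap. The two conditional entropies of the
  hypothesis are the averages over z of H(P_z) and of log |S_z|, so the average gap is at most
  1/(64 n^2); by Jensen the average of \<epsilon> is then at most 1/(8 n).
\<close>

lemma ln_le_half_sub_inverse:
  fixes s :: real
  assumes "1 \<le> s"
  shows "ln s \<le> (s - 1 / s) / 2"
proof -
  let ?g = "\<lambda>s::real. (s - 1 / s) / 2 - ln s"
  have "?g 1 \<le> ?g s"
  proof (rule DERIV_nonneg_imp_nondecreasing[OF assms])
    fix x :: real
    assume "1 \<le> x" "x \<le> s"
    then have "DERIV ?g x :> (1 + 1 / x\<^sup>2) / 2 - 1 / x"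
      by (auto intro!: derivative_eq_intros simp: power2_eq_square field_simps)
    moreover have "(1 + 1 / x\<^sup>2) / 2 - 1 / x = (1 - 1 / x)\<^sup>2 / 2"
      using \<open>1 \<le> x\<close> by (simp add: field_simps power2_eq_square)
    ultimately show "\<exists>y. DERIV ?g x :> y \<and> 0 \<le> y"
      by auto
  qed
  then show ?thesis
    by simp
qed

lemma ln_one_minus_le:
  fixes x :: real
  assumes "0 \<le> x" "x < 1"
  shows "ln (1 - x) \<le> - x - x\<^sup>2 / 2"
proof -
  let ?g = "\<lambda>x::real. ln (1 - x) + x + x\<^sup>2 / 2"
  have "?g x \<le> ?g 0"
  proof (rule DERIV_nonpos_imp_nonincreasing[OF assms(1)])
    fix y :: real
    assume "0 \<le> y" "y \<le> x"
    with assms have "DERIV ?g y :> - (y\<^sup>2) / (1 - y)"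
      by (auto intro!: derivative_eq_intros simp: power2_eq_square field_simps)
    moreover have "- (y\<^sup>2) / (1 - y) \<le> 0"
      using \<open>y \<le> x\<close> assms by simp
    ultimately show "\<exists>d. DERIV ?g y :> d \<and> d \<le> 0"
      by auto
  qed
  then show ?thesis
    by simp
qed

lemma sq_diff_div_max_le_relative_entropy_term:
  fixes p q :: real
  assumes "0 \<le> p" "0 < q"
  shows "(p - q)\<^sup>2 / (2 * max p q) \<le> p * ln (p / q) - p + q"
proof (cases "p < q")
  case True
  show ?thesis
  proof (cases "p = 0")
    case False
    with assms have "0 < p" by simp
    have "ln (q / p) \<le> (q / p - p / q) / 2"
      using ln_le_half_sub_inverse[of "q / p"] True \<open>0 < p\<close> by simp
    then have "p * ln (q / p) \<le> p * ((q / p - p / q) / 2)"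
      using \<open>0 < p\<close> by (intro mult_left_mono) auto
    moreover have "ln (p / q) = - ln (q / p)"
      using \<open>0 < p\<close> assms by (simp add: ln_div)
    moreover have "(p - q)\<^sup>2 / (2 * q) = - (p * ((q / p - p / q) / 2)) - p + q"
      using \<open>0 < p\<close> assms by (simp add: field_simps power2_eq_square)
    ultimately show ?thesis
      using True by (simp add: max_def)
  qed (use assms in \<open>simp add: power2_eq_square\<close>)
next
  case False
  then have "0 < p" "max p q = p"
    using assms by auto
  have "ln (1 - (1 - q / p)) \<le> - (1 - q / p) - (1 - q / p)\<^sup>2 / 2"
    using \<open>0 < p\<close> False assms by (intro ln_one_minus_le) (auto simp: field_simps)
  moreover have "ln (p / q) = - ln (q / p)"
    using \<open>0 < p\<close> assms by (simp add: ln_div)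
  ultimately have "(1 - q / p) + (1 - q / p)\<^sup>2 / 2 \<le> ln (p / q)"
    by simp
  then have "p * ((1 - q / p) + (1 - q / p)\<^sup>2 / 2) \<le> p * ln (p / q)"
    using \<open>0 < p\<close> by (intro mult_left_mono) auto
  moreover have "p * ((1 - q / p) + (1 - q / p)\<^sup>2 / 2) - p + q = (p - q)\<^sup>2 / (2 * p)"
    using \<open>0 < p\<close> by (simp add: field_simps power2_eq_square)
  ultimately show ?thesis
    unfolding \<open>max p q = p\<close> by linarith
qed

lemma Cauchy_Schwarz_ineq_sum_weighted:
  fixes a b :: "'a \<Rightarrow> real"
  assumes "\<And>i. i \<in> I \<Longrightarrow> 0 < b i"
  shows "(\<Sum>i\<in>I. a i)\<^sup>2 \<le> (\<Sum>i\<in>I. (a i)\<^sup>2 / b i) * (\<Sum>i\<in>I. b i)"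
proof -
  have "(\<Sum>i\<in>I. a i) = (\<Sum>i\<in>I. a i / sqrt (b i) * sqrt (b i))"
  proof (rule sum.cong[OF refl])
    fix i
    assume "i \<in> I"
    then have "0 < sqrt (b i)"
      using assms by simp
    then show "a i = a i / sqrt (b i) * sqrt (b i)"
      by simp
  qed
  then have "(\<Sum>i\<in>I. a i)\<^sup>2 \<le> (\<Sum>i\<in>I. (a i / sqrt (b i))\<^sup>2) * (\<Sum>i\<in>I. (sqrt (b i))\<^sup>2)"
    using Cauchy_Schwarz_ineq_sum[of "\<lambda>i. a i / sqrt (b i)" "\<lambda>i. sqrt (b i)" I] by simp
  also have "\<dots> = (\<Sum>i\<in>I. (a i)\<^sup>2 / b i) * (\<Sum>i\<in>I. b i)"
    using assms by (intro arg_cong2[where f = "(*)"] sum.cong) (auto simp: power_divide less_imp_le)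
  finally show ?thesis .
qed

lemma measure_pmf_prob_eq_sum_Int:
  assumes "finite S" "set_pmf M \<subseteq> S"
  shows "measure_pmf.prob M T = (\<Sum>w\<in>T \<inter> S. pmf M w)"
proof -
  have "measure_pmf.prob M T = measure_pmf.prob M (T \<inter> S \<inter> set_pmf M)"
    using assms(2) by (metis inf.absorb_iff2 inf_assoc measure_Int_set_pmf)
  also have "\<dots> = measure_pmf.prob M (T \<inter> S)"
    by (rule measure_Int_set_pmf)
  finally show ?thesis
    using assms(1) by (simp add: measure_measure_pmf_finite)
qed

lemma stat_dist_nonneg: "0 \<le> stat_dist P Q"
proof -
  have "\<bar>measure_pmf.prob P T - measure_pmf.prob Q T\<bar> \<le> 1" for T
    using measure_pmf.prob_le_1[of P T] measure_pmf.prob_le_1[of Q T]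
      measure_nonneg[of "measure_pmf P" T] measure_nonneg[of "measure_pmf Q" T]
    unfolding abs_le_iff by linarith
  then have "bdd_above (range (\<lambda>T. \<bar>measure_pmf.prob P T - measure_pmf.prob Q T\<bar>))"
    by (rule bdd_aboveI2)
  then show ?thesis
    unfolding stat_dist_def by (rule cSUP_upper2[of _ _ "{}"]) auto
qed

lemma stat_dist_le_half_sum_abs:
  assumes "finite S" "set_pmf P \<subseteq> S" "set_pmf Q \<subseteq> S"
  shows "stat_dist P Q \<le> (\<Sum>w\<in>S. \<bar>pmf P w - pmf Q w\<bar>) / 2"
  unfolding stat_dist_def
proof (rule cSUP_least)
  fix T
  define d where "d w = pmf P w - pmf Q w" for w
  have "sum d S = 0"
    using assms by (simp add: d_def sum_subtractf sum_pmf_eq_1)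
  moreover have "sum d S = sum d (T \<inter> S) + sum d (S - T)"
    using assms(1) by (metis inf_commute sum.Int_Diff)
  ultimately have "2 * \<bar>sum d (T \<inter> S)\<bar> \<le> sum (\<lambda>w. \<bar>d w\<bar>) (T \<inter> S) + sum (\<lambda>w. \<bar>d w\<bar>) (S - T)"
    using sum_abs[of d "T \<inter> S"] sum_abs[of d "S - T"] by linarith
  also have "\<dots> = (\<Sum>w\<in>S. \<bar>d w\<bar>)"
    using assms(1) by (metis inf_commute sum.Int_Diff)
  finally show "\<bar>measure_pmf.prob P T - measure_pmf.prob Q T\<bar> \<le> (\<Sum>w\<in>S. \<bar>pmf P w - pmf Q w\<bar>) / 2"
    using assms by (simp add: measure_pmf_prob_eq_sum_Int d_def sum_subtractf)
qed simp

text \<open>Pinsker's inequality with constant 1 instead of 1/2. The distance is half the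
  l1-distance, and Cauchy-Schwarz with weights max p q, which sum to at most 2, reduces it to
  the pointwise bound sq_diff_div_max_le_relative_entropy_term.\<close>

lemma stat_dist_sq_le_relative_entropy:
  assumes "finite S" "set_pmf P \<subseteq> S" "set_pmf Q \<subseteq> S" "\<And>w. w \<in> S \<Longrightarrow> 0 < pmf Q w"
  shows "(stat_dist P Q)\<^sup>2 \<le> (\<Sum>w\<in>S. pmf P w * ln (pmf P w / pmf Q w))"
proof -
  define p q where "p = pmf P" and "q = pmf Q"
  have "(\<Sum>w\<in>S. \<bar>p w - q w\<bar>)\<^sup>2 \<le> (\<Sum>w\<in>S. (p w - q w)\<^sup>2 / max (p w) (q w)) * (\<Sum>w\<in>S. max (p w) (q w))"
    using Cauchy_Schwarz_ineq_sum_weighted[of S "\<lambda>w. max (p w) (q w)" "\<lambda>w. \<bar>p w - q w\<bar>"] assms(4)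
    by (simp add: q_def max.strict_coboundedI2)
  also have "\<dots> \<le> (2 * (\<Sum>w\<in>S. p w * ln (p w / q w) - p w + q w)) * 2"
  proof (rule mult_mono')
    show "(\<Sum>w\<in>S. (p w - q w)\<^sup>2 / max (p w) (q w)) \<le> 2 * (\<Sum>w\<in>S. p w * ln (p w / q w) - p w + q w)"
      unfolding sum_distrib_left
    proof (rule sum_mono)
      fix w
      assume "w \<in> S"
      then have "(p w - q w)\<^sup>2 / (2 * max (p w) (q w)) \<le> p w * ln (p w / q w) - p w + q w"
        using assms(4) by (intro sq_diff_div_max_le_relative_entropy_term) (auto simp: p_def q_def)
      then show "(p w - q w)\<^sup>2 / max (p w) (q w) \<le> 2 * (p w * ln (p w / q w) - p w + q w)"
        by (simp add: field_simps)
    qed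
    show "(\<Sum>w\<in>S. max (p w) (q w)) \<le> 2"
      using sum_mono[of S "\<lambda>w. max (p w) (q w)" "\<lambda>w. p w + q w"] assms(1-3)
      by (simp add: p_def q_def sum.distrib sum_pmf_eq_1)
  qed (auto intro!: sum_nonneg simp: p_def q_def max.coboundedI1)
  also have "\<dots> = 4 * (\<Sum>w\<in>S. p w * ln (p w / q w))"
    using assms(1-3) by (simp add: p_def q_def sum.distrib sum_subtractf sum_pmf_eq_1)
  finally have "(\<Sum>w\<in>S. \<bar>p w - q w\<bar>)\<^sup>2 / 4 \<le> (\<Sum>w\<in>S. p w * ln (p w / q w))"
    by simp
  moreover have "(stat_dist P Q)\<^sup>2 \<le> ((\<Sum>w\<in>S. \<bar>p w - q w\<bar>) / 2)\<^sup>2"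
    using stat_dist_le_half_sum_abs[OF assms(1-3)] stat_dist_nonneg
    by (intro power_mono) (auto simp: p_def q_def)
  ultimately show ?thesis
    by (simp add: p_def q_def power_divide)
qed

lemma stat_dist_pmf_of_set_sq_le_entropy_gap:
  assumes "finite S" "S \<noteq> {}" "set_pmf P \<subseteq> S"
  shows "(stat_dist P (pmf_of_set S))\<^sup>2 \<le> log 2 (card S) - entropy_pmf P"
proof -
  define N where "N = real (card S)"
  have "0 < N"
    using assms(1,2) by (simp add: N_def card_gt_0_iff)
  have "(\<Sum>w\<in>S. pmf P w * ln (pmf P w / pmf (pmf_of_set S) w))
        = (\<Sum>w\<in>set_pmf P. pmf P w * ln (pmf P w) + pmf P w * ln N)"
  proof (rule sum.mono_neutral_cong_right)
    show "\<forall>w\<in>S - set_pmf P. pmf P w * ln (pmf P w / pmf (pmf_of_set S) w) = 0"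
      by (simp add: set_pmf_iff)
    fix w
    assume "w \<in> set_pmf P"
    then have "w \<in> S" "0 < pmf P w"
      using assms(3) by (auto simp: pmf_positive)
    then show "pmf P w * ln (pmf P w / pmf (pmf_of_set S) w) = pmf P w * ln (pmf P w) + pmf P w * ln N"
      using assms(1,2) \<open>0 < N\<close> by (simp add: N_def ln_mult distrib_left)
  qed (use assms in auto)
  also have "\<dots> = ln 2 * (log 2 N - entropy_pmf P)"
    using assms sum_pmf_eq_1[of "set_pmf P" P]
    by (simp add: entropy_pmf_def log_def sum.distrib sum_distrib_left[symmetric] sum_distrib_right[symmetric]
        sum_divide_distrib[symmetric] finite_subset field_simps)
  finally have bound: "(stat_dist P (pmf_of_set S))\<^sup>2 \<le> ln 2 * (log 2 N - entropy_pmf P)"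
    using stat_dist_sq_le_relative_entropy[of S P "pmf_of_set S"] assms by (simp add: card_gt_0_iff)
  have "0 \<le> log 2 N - entropy_pmf P"
    using order_trans[OF zero_le_power2 bound] by (simp add: zero_le_mult_iff)
  moreover have "ln (2::real) \<le> 1"
    using ln_le_minus_one[of 2] by simp
  ultimately show ?thesis
    using bound mult_left_le_one_le[of "log 2 N - entropy_pmf P" "ln 2"] by (simp add: N_def)
qed

lemma cond_entropy_pmf_randomized_eq_expectation:
  fixes U :: "'z pmf" and R :: "'r::finite pmf" and A :: "'z \<Rightarrow> 'r \<Rightarrow> 'w"
  assumes "finite (set_pmf U)"
  shows "cond_entropy_pmf (map_pmf (\<lambda>(z, r). (z, A z r)) (pair_pmf U R))
         = measure_pmf.expectation U (\<lambda>z. entropy_pmf (map_pmf (A z) R))"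
proof -
  define J where "J = map_pmf (\<lambda>(z, r). (z, A z r)) (pair_pmf U R)"
  define P where "P z = map_pmf (A z) R" for z
  have fst_J: "map_pmf fst J = U"
    unfolding J_def map_pmf_comp by (simp add: case_prod_beta' map_fst_pair_pmf)
  have pmf_J: "pmf J (z, w) = pmf U z * pmf (P z) w" for z w
  proof -
    have "(\<lambda>(z, r). (z, A z r)) -` {(z, w)} = {z} \<times> (A z -` {w})"
      by auto
    then have "pmf J (z, w) = measure_pmf.prob (pair_pmf U R) ({z} \<times> (A z -` {w}))"
      unfolding J_def pmf_map by simp
    also have "\<dots> = measure_pmf.prob U {z} * measure_pmf.prob R (A z -` {w})"
      by (rule measure_pmf_prob_product) auto
    finally show ?thesis
      by (simp add: P_def pmf_map measure_pmf_single)
  qed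
  have set_J: "set_pmf J = Sigma (set_pmf U) (\<lambda>z. set_pmf (P z))"
    by (auto simp: J_def P_def)
  have "cond_entropy_pmf J
        = (\<Sum>z\<in>set_pmf U. \<Sum>w\<in>set_pmf (P z). pmf J (z, w) * log 2 (pmf U z / pmf J (z, w)))"
    unfolding cond_entropy_pmf_def fst_J set_J
    using assms by (simp add: sum.Sigma P_def case_prod_beta')
  also have "\<dots> = (\<Sum>z\<in>set_pmf U. pmf U z * entropy_pmf (P z))"
  proof (rule sum.cong[OF refl])
    fix z
    assume "z \<in> set_pmf U"
    then have "0 < pmf U z"
      by (simp add: pmf_positive)
    have "pmf J (z, w) * log 2 (pmf U z / pmf J (z, w)) = pmf U z * - (pmf (P z) w * log 2 (pmf (P z) w))"
      if "w \<in> set_pmf (P z)" for w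
      using \<open>0 < pmf U z\<close> that by (simp add: pmf_J pmf_positive log_divide)
    then show "(\<Sum>w\<in>set_pmf (P z). pmf J (z, w) * log 2 (pmf U z / pmf J (z, w)))
               = pmf U z * entropy_pmf (P z)"
      by (simp add: entropy_pmf_def sum_distrib_left sum_negf)
  qed
  also have "\<dots> = measure_pmf.expectation U (\<lambda>z. entropy_pmf (P z))"
    using assms by (simp add: integral_measure_pmf[of "set_pmf U"] mult.commute)
  finally show ?thesis
    by (simp add: J_def P_def)
qed

lemma cond_entropy_pmf_uniform_eq_expectation_log_card:
  fixes g :: "'z \<Rightarrow> 'y"
  assumes "finite D" "D \<noteq> {}"
  shows "cond_entropy_pmf (map_pmf (\<lambda>z. (g z, z)) (pmf_of_set D))
         = measure_pmf.expectation (pmf_of_set D) (\<lambda>z. log 2 (card {z' \<in> D. g z' = g z}))"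
proof -
  define U where "U = pmf_of_set D"
  define h where "h z = (g z, z)" for z
  have "inj h"
    by (auto simp: h_def inj_def)
  have pmf_U: "pmf U z = 1 / card D" if "z \<in> D" for z
    using assms that by (simp add: U_def)
  have pmf_g: "pmf (map_pmf g U) (g z) = card {z' \<in> D. g z' = g z} / card D" for z
  proof -
    have "D \<inter> g -` {g z} = {z' \<in> D. g z' = g z}"
      by auto
    then show ?thesis
      using assms by (simp add: pmf_map U_def measure_pmf_of_set)
  qed
  have "cond_entropy_pmf (map_pmf h U)
        = (\<Sum>z\<in>D. pmf (map_pmf h U) (h z) * log 2 (pmf (map_pmf g U) (g z) / pmf (map_pmf h U) (h z)))"
    unfolding cond_entropy_pmf_def using assms \<open>inj h\<close>
    by (simp add: U_def map_pmf_comp h_def sum.reindex inj_on_def)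
  also have "\<dots> = (\<Sum>z\<in>D. log 2 (card {z' \<in> D. g z' = g z}) / card D)"
    using assms by (intro sum.cong) (simp_all add: pmf_map_inj'[OF \<open>inj h\<close>] pmf_U pmf_g)
  finally show ?thesis
    using assms by (simp add: h_def[abs_def] U_def integral_pmf_of_set sum_divide_distrib)
qed

lemma measure_pmf_expectation_square_le:
  fixes X :: "'a \<Rightarrow> real"
  assumes "finite (set_pmf M)"
  shows "(measure_pmf.expectation M X)\<^sup>2 \<le> measure_pmf.expectation M (\<lambda>x. (X x)\<^sup>2)"
proof -
  have "0 \<le> measure_pmf.expectation M (\<lambda>x. (X x - measure_pmf.expectation M X)\<^sup>2)"
    by (intro integral_nonneg_AE) simp
  also have "\<dots> = measure_pmf.expectation M (\<lambda>x. (X x)\<^sup>2) - (measure_pmf.expectation M X)\<^sup>2"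
    using integrable_measure_pmf_finite[OF assms] by (intro measure_pmf.variance_eq)
  finally show ?thesis
    by simp
qed

lemma finite_dom_n: "finite (dom_n n)"
proof (rule finite_subset)
  show "dom_n n \<subseteq> {x. length x = n} \<times> {1..n}"
    by (auto simp: dom_n_def)
  show "finite ({x :: bool list. length x = n} \<times> {1..n})"
    using finite_lists_length_eq[of "UNIV :: bool set" n] by simp
qed

lemma dom_n_nonempty: "1 \<le> n \<Longrightarrow> dom_n n \<noteq> {}"
  by (auto simp: dom_n_def intro!: exI[of _ "replicate n True"] exI[of _ 1])

lemma finite_Fpreimage: "finite (Fpreimage n f z)"
  using finite_dom_n[of n] by (simp add: Fpreimage_def)

lemma Fpreimage_self: "z \<in> dom_n n \<Longrightarrow> z \<in> Fpreimage n f z"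
  by (simp add: Fpreimage_def)

lemma cond_entropy_gap_eq_expectation:
  fixes A :: "bool list \<times> nat \<Rightarrow> 'r::finite \<Rightarrow> bool list \<times> nat"
  assumes "1 \<le> n"
  shows "cond_entropy_pmf (map_pmf (\<lambda>z. (Fpre f z, z)) (pmf_of_set (dom_n n)))
         - cond_entropy_pmf (map_pmf (\<lambda>(z, r). (z, A z r))
                              (pair_pmf (pmf_of_set (dom_n n)) (pmf_of_set UNIV)))
         = measure_pmf.expectation (pmf_of_set (dom_n n))
             (\<lambda>z. log 2 (card (Fpreimage n f z)) - entropy_pmf (out_dist A z))"
proof -
  have D: "finite (dom_n n)" "dom_n n \<noteq> {}"
    using assms by (simp_all add: finite_dom_n dom_n_nonempty)
  have "cond_entropy_pmf (map_pmf (\<lambda>(z, r). (z, A z r)) (pair_pmf (pmf_of_set (dom_n n)) (pmf_of_set UNIV)))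
        = measure_pmf.expectation (pmf_of_set (dom_n n)) (\<lambda>z. entropy_pmf (out_dist A z))"
    using D by (simp add: cond_entropy_pmf_randomized_eq_expectation out_dist_def)
  moreover have "cond_entropy_pmf (map_pmf (\<lambda>z. (Fpre f z, z)) (pmf_of_set (dom_n n)))
        = measure_pmf.expectation (pmf_of_set (dom_n n)) (\<lambda>z. log 2 (card (Fpreimage n f z)))"
    using cond_entropy_pmf_uniform_eq_expectation_log_card[OF D] by (simp add: Fpreimage_def)
  ultimately show ?thesis
    using D by (simp add: integral_pmf_of_set sum_subtractf diff_divide_distrib)
qed

lemma stat_dist_out_dist_sq_le_entropy_gap:
  assumes "z \<in> dom_n n" "\<And>r. A z r \<in> Fpreimage n f z"
  shows "(stat_dist (out_dist A z) (pmf_of_set (Fpreimage n f z)))\<^sup>2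
         \<le> log 2 (card (Fpreimage n f z)) - entropy_pmf (out_dist A z)"
proof (rule stat_dist_pmf_of_set_sq_le_entropy_gap)
  show "Fpreimage n f z \<noteq> {}"
    using Fpreimage_self[OF assms(1)] by blast
  show "set_pmf (out_dist A z) \<subseteq> Fpreimage n f z"
    using assms(2) by (auto simp: out_dist_def)
qed (rule finite_Fpreimage)

theorem lemma4p3:
  fixes n :: nat
    and f :: "bool list \<Rightarrow> bool list"
    and A :: "bool list \<times> nat \<Rightarrow> 'r::finite \<Rightarrow> bool list \<times> nat"
  assumes n_pos: "n \<ge> 1"
    and f_range: "\<And>x. length x = n \<Longrightarrow> length (f x) = n"
    and collision_finder: "\<And>z r. z \<in> dom_n n \<Longrightarrow> A z r \<in> Fpreimage n f z"
    and entropy_hyp: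
      "cond_entropy_pmf (map_pmf (\<lambda>(z, r). (z, A z r))
                           (pair_pmf (pmf_of_set (dom_n n)) (pmf_of_set (UNIV :: 'r set))))
       \<ge> cond_entropy_pmf (map_pmf (\<lambda>z. (Fpre f z, z)) (pmf_of_set (dom_n n)))
         - 1 / (64 * real n ^ 2)"
  shows "measure_pmf.expectation (pmf_of_set (dom_n n))
           (\<lambda>z. stat_dist (out_dist A z) (pmf_of_set (Fpreimage n f z)))
         \<le> 1 / (8 * real n)"
proof -
  define M where "M = pmf_of_set (dom_n n)"
  define eps where "eps = (\<lambda>z. stat_dist (out_dist A z) (pmf_of_set (Fpreimage n f z)))"
  have M: "set_pmf M = dom_n n" "finite (set_pmf M)"
    using n_pos by (simp_all add: M_def finite_dom_n dom_n_nonempty)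
  have "(measure_pmf.expectation M eps)\<^sup>2 \<le> measure_pmf.expectation M (\<lambda>z. (eps z)\<^sup>2)"
    using M(2) by (rule measure_pmf_expectation_square_le)
  also have "\<dots> \<le> measure_pmf.expectation M
                    (\<lambda>z. log 2 (card (Fpreimage n f z)) - entropy_pmf (out_dist A z))"
    using M collision_finder stat_dist_out_dist_sq_le_entropy_gap[of _ n A f]
    by (intro integral_mono_AE AE_pmfI) (auto simp: integrable_measure_pmf_finite eps_def)
  also have "\<dots> \<le> (1 / (8 * real n))\<^sup>2"
    using entropy_hyp cond_entropy_gap_eq_expectation[OF n_pos, of f A]
    by (simp add: M_def power2_eq_square)
  finally have "measure_pmf.expectation M eps \<le> 1 / (8 * real n)"
    by (rule power2_le_imp_le) simp
  then show ?thesis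
    by (simp add: M_def eps_def)
qed

end
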